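(* Let \[P=\{x\in[0,2]^2 : x_1+10x_2\le 20,\ 10x_1+x_2\le 20\},\] \[P_L=\{(x,z)\in\mathbb{R}^2\times[0,1]^4 : x\in P,\ x_i=z_{i1}+2z_{i2}\text{ for } i=1,2\},\] \[P_{L+}=\{(x,z)\in\mathbb{R}^2\times[0,1]^4 : x\in P,\ x_i=z_{i1}+2z_{i2},\ z_{i1}+z_{i2}\le1\text{ for } i=1,2\},\] where all variables of $P_L$ and $P_{L+}$ (both $x$ and $z$) are integer variables. Then \[\operatorname{proj}_x\big(\mathrm{SC}(P_{L+})\big)\subsetneq \operatorname{proj}_x\big(\mathrm{SC}(P_L)\big).\]
   Context: For $X\subseteq\mathbb{R}^N$ with all coordinates integer, the split closure is $\mathrm{SC}(X)=\bigcap\mathrm{conv}(X\setminus S)$, the intersection over all split sets $S=\{y\in\mathbb{R}^N:\pi_0<\pi^Ty<\pi_0+1\}$ with $\pi\in\mathbb{Z}^N$, $\pi_0\in\mathbb{Z}$. $\operatorname{proj}_x$ is orthogonal projection onto the $x$-coordinates. *)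

theory Defs
  imports "HOL-Analysis.Analysis"
begin

datatype coord = X1 | X2 | Z11 | Z12 | Z21 | Z22

lemma UNIV_coord: "(UNIV :: coord set) = {X1, X2, Z11, Z12, Z21, Z22}"
  using coord.exhaust by auto

instance coord :: finite
  by standard (simp add: UNIV_coord)

definition split_set :: "real ^ 'n \<Rightarrow> int \<Rightarrow> (real ^ 'n) set" where
  "split_set \<pi> \<pi>0 = {y. real_of_int \<pi>0 < \<pi> \<bullet> y \<and> \<pi> \<bullet> y < real_of_int \<pi>0 + 1}"

text \<open>Split closure, all coordinates being integer variables.\<close>
definition split_closure :: "(real ^ 'n::finite) set \<Rightarrow> (real ^ 'n) set" where
  "split_closure X = \<Inter> {convex hull (X - split_set \<pi> \<pi>0) | \<pi> \<pi>0. \<forall>i. \<pi> $ i \<in> \<int>}"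

definition P :: "(real \<times> real) set" where
  "P = {(x1, x2). 0 \<le> x1 \<and> x1 \<le> 2 \<and> 0 \<le> x2 \<and> x2 \<le> 2 \<and>
                  x1 + 10 * x2 \<le> 20 \<and> 10 * x1 + x2 \<le> 20}"

definition in01 :: "real \<Rightarrow> bool" where
  "in01 t \<longleftrightarrow> 0 \<le> t \<and> t \<le> 1"

definition P_L :: "(real ^ coord) set" where
  "P_L = {v. (v $ X1, v $ X2) \<in> P \<and>
             in01 (v $ Z11) \<and> in01 (v $ Z12) \<and> in01 (v $ Z21) \<and> in01 (v $ Z22) \<and>
             v $ X1 = v $ Z11 + 2 * v $ Z12 \<and> v $ X2 = v $ Z21 + 2 * v $ Z22}"

definition P_Lplus :: "(real ^ coord) set" where
  "P_Lplus = {v. v \<in> P_L \<and> v $ Z11 + v $ Z12 \<le> 1 \<and> v $ Z21 + v $ Z22 \<le> 1}"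

definition proj_x :: "real ^ coord \<Rightarrow> real \<times> real" where
  "proj_x v = (v $ X1, v $ X2)"

end

theory Submission
  imports Defs
begin

text \<open>
  The point \<open>(5/4, 5/4)\<close> separates the two projections.

  On \<open>P_Lplus\<close> the splits on \<open>z\<^sub>1\<^sub>1 + z\<^sub>1\<^sub>2 + z\<^sub>2\<^sub>2\<close> and on \<open>z\<^sub>1\<^sub>2 + z\<^sub>2\<^sub>1 + z\<^sub>2\<^sub>2\<close> with
  \<open>\<pi>\<^sub>0 = 1\<close> yield the cuts \<open>z\<^sub>1\<^sub>1 + z\<^sub>1\<^sub>2 + z\<^sub>2\<^sub>2 \<le> 1\<close> and \<open>z\<^sub>1\<^sub>2 + z\<^sub>2\<^sub>1 + z\<^sub>2\<^sub>2 \<le> 1\<close>,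
  whose sum together with the lifting equations gives \<open>x\<^sub>1 + x\<^sub>2 \<le> 2\<close>.

  On \<open>P_L\<close> the lift of \<open>(5/4, 5/4)\<close> with \<open>z = (3/4, 1/4, 3/4, 1/4)\<close> survives every
  split. After substituting the lifting equations a split is given by an integer functional
  \<open>p\<^sub>1 z\<^sub>1\<^sub>1 + p\<^sub>2 z\<^sub>1\<^sub>2 + p\<^sub>3 z\<^sub>2\<^sub>1 + p\<^sub>4 z\<^sub>2\<^sub>2\<close>. If the split contains the point, a finite
  integer case analysis on \<open>p\<close> exhibits the point as a convex combination of lattice
  points of \<open>P_L\<close> and fractional points of \<open>P_L\<close> that lie outside the split.
\<close>

lemma convex_combination_in_convex_hull:
  fixes cs :: "(real \<times> 'a::real_vector) list"
  assumes "\<forall>c \<in> set (map fst cs). 0 \<le> c" "sum_list (map fst cs) = 1"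
  shows "sum_list (map (\<lambda>(c, q). c *\<^sub>R q) cs) \<in> convex hull (snd ` set cs)"
proof -
  have "(\<Sum>i<length cs. fst (cs ! i) *\<^sub>R snd (cs ! i)) \<in> convex hull (snd ` set cs)"
  proof (rule convex_sum)
    show "(\<Sum>i<length cs. fst (cs ! i)) = 1"
      using assms(2) by (simp add: sum_list_sum_nth atLeast0LessThan)
    show "0 \<le> fst (cs ! i)" if "i \<in> {..<length cs}" for i
      using assms(1) that by simp
    show "snd (cs ! i) \<in> convex hull (snd ` set cs)" if "i \<in> {..<length cs}" for i
      using that by (intro hull_inc) simp
  qed simp_all
  also have "(\<Sum>i<length cs. fst (cs ! i) *\<^sub>R snd (cs ! i)) = sum_list (map (\<lambda>(c, q). c *\<^sub>R q) cs)"
    by (simp add: sum_list_sum_nth atLeast0LessThan case_prod_beta)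
  finally show ?thesis .
qed

definition in_gap :: "int \<Rightarrow> int \<Rightarrow> int \<Rightarrow> bool" where
  "in_gap d k t \<longleftrightarrow> d * k < t \<and> t < d * (k + 1)"

lemma in_gap_if_in_split_set:
  assumes "u \<in> split_set p k" "p \<bullet> u = of_int t / of_int d" "0 < d"
  shows "in_gap d k t"
proof -
  have d: "0 < real_of_int d"
    using assms(3) by simp
  have "real_of_int (d * k) < of_int t" "real_of_int t < of_int (d * (k + 1))"
    using assms(1,2) d by (simp_all add: split_set_def field_simps)
  then show ?thesis
    unfolding in_gap_def of_int_less_iff by blast
qed

lemma integral_point_notin_split_set:
  fixes p u :: "real ^ 'n::finite"
  assumes "\<forall>i. p $ i \<in> \<int>" "\<forall>i. u $ i \<in> \<int>"
  shows "u \<notin> split_set p k"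
proof
  assume u: "u \<in> split_set p k"
  have "p \<bullet> u \<in> \<int>"
    using assms by (auto simp: inner_vec_def)
  then obtain t where "p \<bullet> u = of_int t / of_int 1"
    by (auto elim: Ints_cases)
  with u have "in_gap 1 k t"
    by (rule in_gap_if_in_split_set) simp
  then show False
    by (auto simp: in_gap_def)
qed

lemma split_closure_mono:
  assumes "X \<subseteq> Y"
  shows "split_closure X \<subseteq> split_closure Y"
proof -
  have "convex hull (X - split_set \<pi> \<pi>0) \<subseteq> convex hull (Y - split_set \<pi> \<pi>0)" for \<pi> \<pi>0
    using assms by (intro hull_mono) blast
  then show ?thesis
    unfolding split_closure_def by blast
qed

lemma split_closure_subset_convex:
  assumes "\<forall>i. \<pi> $ i \<in> \<int>" "convex C" "X - split_set \<pi> \<pi>0 \<subseteq> C"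
  shows "split_closure X \<subseteq> C"
proof -
  have "split_closure X \<subseteq> convex hull (X - split_set \<pi> \<pi>0)"
    using assms(1) unfolding split_closure_def by blast
  also have "\<dots> \<subseteq> C"
    using assms(2,3) by (rule hull_minimal[rotated])
  finally show ?thesis .
qed

definition vec6 :: "real \<Rightarrow> real \<Rightarrow> real \<Rightarrow> real \<Rightarrow> real \<Rightarrow> real \<Rightarrow> real ^ coord" where
  "vec6 a b c d e f =
     (\<chi> i. case i of X1 \<Rightarrow> a | X2 \<Rightarrow> b | Z11 \<Rightarrow> c | Z12 \<Rightarrow> d | Z21 \<Rightarrow> e | Z22 \<Rightarrow> f)"

lemma vec6_nth [simp]:
  "vec6 a b c d e f $ X1 = a" "vec6 a b c d e f $ X2 = b" "vec6 a b c d e f $ Z11 = c"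
  "vec6 a b c d e f $ Z12 = d" "vec6 a b c d e f $ Z21 = e" "vec6 a b c d e f $ Z22 = f"
  by (simp_all add: vec6_def)

lemma all_coord_iff: "(\<forall>i. Q i) \<longleftrightarrow> Q X1 \<and> Q X2 \<and> Q Z11 \<and> Q Z12 \<and> Q Z21 \<and> Q Z22"
  by (metis coord.exhaust)

lemma vec_eq_coord_iff:
  "(u :: real ^ coord) = w \<longleftrightarrow>
     u $ X1 = w $ X1 \<and> u $ X2 = w $ X2 \<and> u $ Z11 = w $ Z11 \<and>
     u $ Z12 = w $ Z12 \<and> u $ Z21 = w $ Z21 \<and> u $ Z22 = w $ Z22"
  unfolding vec_eq_iff all_coord_iff ..

lemma inner_coord:
  "(p :: real ^ coord) \<bullet> y =
     p $ X1 * y $ X1 + p $ X2 * y $ X2 + p $ Z11 * y $ Z11 + p $ Z12 * y $ Z12 +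
     p $ Z21 * y $ Z21 + p $ Z22 * y $ Z22"
  by (simp add: inner_vec_def UNIV_coord)

definition lift :: "real \<Rightarrow> real \<Rightarrow> real \<Rightarrow> real \<Rightarrow> real ^ coord" where
  "lift a b c d = vec6 (a + 2 * b) (c + 2 * d) a b c d"

lemma lift_in_P_L_iff:
  "lift a b c d \<in> P_L \<longleftrightarrow>
     0 \<le> a + 2 * b \<and> a + 2 * b \<le> 2 \<and> 0 \<le> c + 2 * d \<and> c + 2 * d \<le> 2 \<and>
     (a + 2 * b) + 10 * (c + 2 * d) \<le> 20 \<and> 10 * (a + 2 * b) + (c + 2 * d) \<le> 20 \<and>
     0 \<le> a \<and> a \<le> 1 \<and> 0 \<le> b \<and> b \<le> 1 \<and> 0 \<le> c \<and> c \<le> 1 \<and> 0 \<le> d \<and> d \<le> 1"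
  by (auto simp: P_L_def P_def in01_def lift_def)

lemma inner_lift_integer:
  assumes "\<forall>i. p $ i \<in> \<int>"
  obtains p1 p2 p3 p4 :: int where
    "\<And>a b c d. p \<bullet> lift a b c d = of_int p1 * a + of_int p2 * b + of_int p3 * c + of_int p4 * d"
proof -
  obtain x1 x2 z11 z12 z21 z22 where
    "p $ X1 = of_int x1" "p $ X2 = of_int x2" "p $ Z11 = of_int z11"
    "p $ Z12 = of_int z12" "p $ Z21 = of_int z21" "p $ Z22 = of_int z22"
    using assms by (metis Ints_cases)
  then have "p \<bullet> lift a b c d =
      of_int (x1 + z11) * a + of_int (2 * x1 + z12) * b +
      of_int (x2 + z21) * c + of_int (2 * x2 + z22) * d" for a b c d
    by (simp add: inner_coord lift_def algebra_simps)
  then show ?thesis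
    by (rule that)
qed

subsection \<open>A point of the split closure of \<open>P_L\<close>\<close>

definition v_star :: "real ^ coord" where
  "v_star = lift (3/4) (1/4) (3/4) (1/4)"

lemma v_star_in_P_L: "v_star \<in> P_L"
  by (simp add: v_star_def lift_in_P_L_iff)

lemma v_star_in_convex_hulls:
  "v_star \<in> convex hull {lift 0 1 0 0, lift 1 0 1 0, lift 1 0 1 (9/20)}"
  "v_star \<in> convex hull {lift 0 0 0 0, lift 1 0 1 0, lift 1 (9/22) 1 (9/22)}"
  "v_star \<in> convex hull {lift 0 0 0 1, lift 1 0 1 0, lift 1 (9/20) 1 0}"
  "v_star \<in> convex hull {lift 0 0 0 0, lift 1 0 1 0, lift 1 (9/22) 0 (10/11),
                          lift 0 (10/11) 1 (9/22)}"
  "v_star \<in> convex hull {lift 0 0 0 0, lift 1 0 1 0, lift 0 0 1 (1/2), lift 0 (19/20) 1 0,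
                          lift 1 (9/22) 0 (10/11)}"
  "v_star \<in> convex hull {lift 0 0 0 0, lift 1 0 1 0, lift 0 (10/11) 1 (9/22),
                          lift 1 0 0 (19/20), lift 1 (1/2) 0 0}"
proof -
  have comb: "v_star \<in> convex hull (snd ` set cs)"
    if "v_star = sum_list (map (\<lambda>(c, q). c *\<^sub>R q) cs)"
      "\<forall>c \<in> set (map fst cs). 0 \<le> c" "sum_list (map fst cs) = 1" for cs
    using convex_combination_in_convex_hull[of cs] that by auto
  note simps = v_star_def lift_def vec_eq_coord_iff
  show "v_star \<in> convex hull {lift 0 1 0 0, lift 1 0 1 0, lift 1 0 1 (9/20)}"
    using comb[of "[(1/4, lift 0 1 0 0), (7/36, lift 1 0 1 0), (5/9, lift 1 0 1 (9/20))]"]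
    by (simp add: simps)
  show "v_star \<in> convex hull {lift 0 0 0 0, lift 1 0 1 0, lift 1 (9/22) 1 (9/22)}"
    using comb[of "[(1/4, lift 0 0 0 0), (5/36, lift 1 0 1 0), (11/18, lift 1 (9/22) 1 (9/22))]"]
    by (simp add: simps)
  show "v_star \<in> convex hull {lift 0 0 0 1, lift 1 0 1 0, lift 1 (9/20) 1 0}"
    using comb[of "[(1/4, lift 0 0 0 1), (7/36, lift 1 0 1 0), (5/9, lift 1 (9/20) 1 0)]"]
    by (simp add: simps)
  show "v_star \<in> convex hull {lift 0 0 0 0, lift 1 0 1 0, lift 1 (9/22) 0 (10/11),
                              lift 0 (10/11) 1 (9/22)}"
    using comb[of "[(7/116, lift 0 0 0 0), (65/116, lift 1 0 1 0),
                    (11/58, lift 1 (9/22) 0 (10/11)), (11/58, lift 0 (10/11) 1 (9/22))]"]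
    by (simp add: simps)
  show "v_star \<in> convex hull {lift 0 0 0 0, lift 1 0 1 0, lift 0 0 1 (1/2), lift 0 (19/20) 1 0,
                              lift 1 (9/22) 0 (10/11)}"
    using comb[of "[(41/2716, lift 0 0 0 0), (1399/2716, lift 1 0 1 0), (99/1358, lift 0 0 1 (1/2)),
                    (110/679, lift 0 (19/20) 1 0), (319/1358, lift 1 (9/22) 0 (10/11))]"]
    by (simp add: simps)
  show "v_star \<in> convex hull {lift 0 0 0 0, lift 1 0 1 0, lift 0 (10/11) 1 (9/22),
                              lift 1 0 0 (19/20), lift 1 (1/2) 0 0}"
    using comb[of "[(41/2716, lift 0 0 0 0), (1399/2716, lift 1 0 1 0),
                    (319/1358, lift 0 (10/11) 1 (9/22)), (110/679, lift 1 0 0 (19/20)),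
                    (99/1358, lift 1 (1/2) 0 0)]"]
    by (simp add: simps)
qed

lemma gap_system_solutions:
  fixes t a b :: int
  assumes "0 < 20 * t + 9 * b" "20 * t + 9 * b < 20" "0 < 20 * t + 9 * a" "20 * t + 9 * a < 20"
    "0 < 22 * t + 9 * a + 9 * b" "22 * t + 9 * a + 9 * b < 22"
  shows "t = 0 \<and> a = 1 \<and> b = 1 \<or> t = 1 \<and> a = -1 \<and> b = -1"
proof -
  have "-2 < t" "t < 3"
    using assms by linarith+
  then have "t = -1 \<or> t = 0 \<or> t = 1 \<or> t = 2"
    by linarith
  moreover have "t = -1 \<Longrightarrow> False" "t = 2 \<Longrightarrow> False"
    using assms by presburger+
  moreover have "t = 0 \<Longrightarrow> a = 1 \<and> b = 1" "t = 1 \<Longrightarrow> a = -1 \<and> b = -1"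
    using assms by presburger+
  ultimately show ?thesis
    by blast
qed

text \<open>
  The six numerators are those of \<open>p \<bullet> u\<close> for the fractional points \<open>u\<close> of
  \<open>v_star_in_convex_hulls\<close>; each alternative says that all fractional points of one of
  those hulls lie outside the split.
\<close>

lemma v_star_split_alternatives:
  fixes p1 p2 p3 p4 k :: int
  assumes "in_gap 4 k (3 * p1 + p2 + 3 * p3 + p4)"
  shows "\<not> in_gap 20 k (20 * p1 + 20 * p3 + 9 * p4) \<or>
    \<not> in_gap 22 k (22 * p1 + 9 * p2 + 22 * p3 + 9 * p4) \<or>
    \<not> in_gap 20 k (20 * p1 + 9 * p2 + 20 * p3) \<or>
    \<not> in_gap 22 k (22 * p1 + 9 * p2 + 20 * p4) \<and> \<not> in_gap 22 k (20 * p2 + 22 * p3 + 9 * p4) \<or>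
    \<not> in_gap 2 k (2 * p3 + p4) \<and> \<not> in_gap 20 k (19 * p2 + 20 * p3) \<and>
      \<not> in_gap 22 k (22 * p1 + 9 * p2 + 20 * p4) \<or>
    \<not> in_gap 22 k (20 * p2 + 22 * p3 + 9 * p4) \<and> \<not> in_gap 20 k (20 * p1 + 19 * p4) \<and>
      \<not> in_gap 2 k (2 * p1 + p2)"
proof (rule ccontr)
  assume none: "\<not> ?thesis"
  define t where "t = p1 + p3 - k"
  have p3: "p3 = k + t - p1"
    unfolding t_def by simp
  have "0 < 20 * t + 9 * p4" "20 * t + 9 * p4 < 20" "0 < 20 * t + 9 * p2" "20 * t + 9 * p2 < 20"
    "0 < 22 * t + 9 * p2 + 9 * p4" "22 * t + 9 * p2 + 9 * p4 < 22"
    using none unfolding in_gap_def t_def by (simp_all add: algebra_simps)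
  then have "t = 0 \<and> p2 = 1 \<and> p4 = 1 \<or> t = 1 \<and> p2 = -1 \<and> p4 = -1"
    by (rule gap_system_solutions)
  then consider "t = 0" "p2 = 1" "p4 = 1" | "t = 1" "p2 = -1" "p4 = -1"
    by blast
  moreover have fourth: "in_gap 22 k (22 * p1 + 9 * p2 + 20 * p4) \<or> in_gap 22 k (20 * p2 + 22 * p3 + 9 * p4)"
    and fifth: "in_gap 2 k (2 * p3 + p4) \<or> in_gap 20 k (19 * p2 + 20 * p3) \<or>
      in_gap 22 k (22 * p1 + 9 * p2 + 20 * p4)"
    and sixth: "in_gap 22 k (20 * p2 + 22 * p3 + 9 * p4) \<or> in_gap 20 k (20 * p1 + 19 * p4) \<or>
      in_gap 2 k (2 * p1 + p2)"
    using none by blast+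
  txt \<open>In each of the two cases every remaining \<open>in_gap\<close> fact determines \<open>p\<^sub>1\<close>,
    and the values so obtained are incompatible.\<close>
  ultimately show False
  proof cases
    case 1
    have "-2 < k" "k < 2"
      using assms unfolding in_gap_def p3 1 by simp_all
    moreover have
      "in_gap 22 k (22 * p1 + 9 * p2 + 20 * p4) \<Longrightarrow> p1 = k - 1"
      "in_gap 22 k (20 * p2 + 22 * p3 + 9 * p4) \<Longrightarrow> p1 = 1"
      "in_gap 2 k (2 * p3 + p4) \<Longrightarrow> p1 = 0"
      "in_gap 20 k (19 * p2 + 20 * p3) \<Longrightarrow> p1 = 0"
      "in_gap 20 k (20 * p1 + 19 * p4) \<Longrightarrow> p1 = k"
      "in_gap 2 k (2 * p1 + p2) \<Longrightarrow> p1 = k"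
      unfolding in_gap_def p3 1 by presburger+
    ultimately show False
      using fourth fifth sixth by linarith
  next
    case 2
    have "-3 < k" "k < 1"
      using assms unfolding in_gap_def p3 2 by simp_all
    moreover have
      "in_gap 22 k (22 * p1 + 9 * p2 + 20 * p4) \<Longrightarrow> p1 = k + 2"
      "in_gap 22 k (20 * p2 + 22 * p3 + 9 * p4) \<Longrightarrow> p1 = -1"
      "in_gap 2 k (2 * p3 + p4) \<Longrightarrow> p1 = 0"
      "in_gap 20 k (19 * p2 + 20 * p3) \<Longrightarrow> p1 = 0"
      "in_gap 20 k (20 * p1 + 19 * p4) \<Longrightarrow> p1 = k + 1"
      "in_gap 2 k (2 * p1 + p2) \<Longrightarrow> p1 = k + 1"
      unfolding in_gap_def p3 2 by presburger+
    ultimately show False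
      using fourth fifth sixth by linarith
  qed
qed

lemma v_star_in_convex_hull_if_gap:
  fixes p1 p2 p3 p4 k :: int
  assumes lattice: "{lift 0 0 0 0, lift 1 0 1 0, lift 0 1 0 0, lift 0 0 0 1} \<subseteq> X"
    and fractional: "\<And>a b c d t n. lift a b c d \<in> P_L \<Longrightarrow>
      of_int p1 * a + of_int p2 * b + of_int p3 * c + of_int p4 * d = of_int t / of_int n \<Longrightarrow>
      0 < n \<Longrightarrow> \<not> in_gap n k t \<Longrightarrow> lift a b c d \<in> X"
    and gap: "in_gap 4 k (3 * p1 + p2 + 3 * p3 + p4)"
  shows "v_star \<in> convex hull X"
proof -
  have hull: "v_star \<in> convex hull X" if "v_star \<in> convex hull S" "S \<subseteq> X" for S
    using that hull_mono by blast
  note fractional' = fractional[OF _ _ zero_less_numeral, rotated 2]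
  note simps = lift_in_P_L_iff field_simps
  from v_star_split_alternatives[OF gap] show ?thesis
  proof (elim disjE conjE)
    assume "\<not> in_gap 20 k (20 * p1 + 20 * p3 + 9 * p4)"
    then have "lift 1 0 1 (9/20) \<in> X"
      by (rule fractional') (simp_all add: simps)
    with lattice show ?thesis
      by (intro hull[OF v_star_in_convex_hulls(1)]) simp
  next
    assume "\<not> in_gap 22 k (22 * p1 + 9 * p2 + 22 * p3 + 9 * p4)"
    then have "lift 1 (9/22) 1 (9/22) \<in> X"
      by (rule fractional') (simp_all add: simps)
    with lattice show ?thesis
      by (intro hull[OF v_star_in_convex_hulls(2)]) simp
  next
    assume "\<not> in_gap 20 k (20 * p1 + 9 * p2 + 20 * p3)"
    then have "lift 1 (9/20) 1 0 \<in> X"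
      by (rule fractional') (simp_all add: simps)
    with lattice show ?thesis
      by (intro hull[OF v_star_in_convex_hulls(3)]) simp
  next
    assume h1: "\<not> in_gap 22 k (22 * p1 + 9 * p2 + 20 * p4)"
      and h2: "\<not> in_gap 22 k (20 * p2 + 22 * p3 + 9 * p4)"
    have "lift 1 (9/22) 0 (10/11) \<in> X"
      using h1 by (rule fractional') (simp_all add: simps)
    moreover have "lift 0 (10/11) 1 (9/22) \<in> X"
      using h2 by (rule fractional') (simp_all add: simps)
    ultimately show ?thesis
      using lattice by (intro hull[OF v_star_in_convex_hulls(4)]) simp
  next
    assume h1: "\<not> in_gap 2 k (2 * p3 + p4)" and h2: "\<not> in_gap 20 k (19 * p2 + 20 * p3)"
      and h3: "\<not> in_gap 22 k (22 * p1 + 9 * p2 + 20 * p4)"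
    have "lift 0 0 1 (1/2) \<in> X"
      using h1 by (rule fractional') (simp_all add: simps)
    moreover have "lift 0 (19/20) 1 0 \<in> X"
      using h2 by (rule fractional') (simp_all add: simps)
    moreover have "lift 1 (9/22) 0 (10/11) \<in> X"
      using h3 by (rule fractional') (simp_all add: simps)
    ultimately show ?thesis
      using lattice by (intro hull[OF v_star_in_convex_hulls(5)]) simp
  next
    assume h1: "\<not> in_gap 22 k (20 * p2 + 22 * p3 + 9 * p4)"
      and h2: "\<not> in_gap 20 k (20 * p1 + 19 * p4)" and h3: "\<not> in_gap 2 k (2 * p1 + p2)"
    have "lift 0 (10/11) 1 (9/22) \<in> X"
      using h1 by (rule fractional') (simp_all add: simps)
    moreover have "lift 1 0 0 (19/20) \<in> X"
      using h2 by (rule fractional') (simp_all add: simps)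
    moreover have "lift 1 (1/2) 0 0 \<in> X"
      using h3 by (rule fractional') (simp_all add: simps)
    ultimately show ?thesis
      using lattice by (intro hull[OF v_star_in_convex_hulls(6)]) simp
  qed
qed

lemma v_star_in_split_closure_P_L: "v_star \<in> split_closure P_L"
proof -
  have "v_star \<in> convex hull (P_L - split_set p k)" if p: "\<forall>i. p $ i \<in> \<int>" for p k
  proof (cases "v_star \<in> split_set p k")
    case False
    then show ?thesis
      using v_star_in_P_L by (auto intro: hull_inc)
  next
    case True
    obtain p1 p2 p3 p4 :: int where inner: "\<And>a b c d.
        p \<bullet> lift a b c d = of_int p1 * a + of_int p2 * b + of_int p3 * c + of_int p4 * d"
      using inner_lift_integer[OF p] by blast
    show ?thesis
    proof (rule v_star_in_convex_hull_if_gap)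
      have "lift a b c d \<notin> split_set p k" if "a \<in> \<int>" "b \<in> \<int>" "c \<in> \<int>" "d \<in> \<int>" for a b c d
        using p that by (intro integral_point_notin_split_set) (auto simp: lift_def all_coord_iff)
      then show "{lift 0 0 0 0, lift 1 0 1 0, lift 0 1 0 0, lift 0 0 0 1} \<subseteq> P_L - split_set p k"
        by (simp add: lift_in_P_L_iff)
      show "lift a b c d \<in> P_L - split_set p k"
        if "lift a b c d \<in> P_L" "of_int p1 * a + of_int p2 * b + of_int p3 * c + of_int p4 * d =
            of_int t / of_int n" "0 < n" "\<not> in_gap n k t" for a b c d t n
        using that in_gap_if_in_split_set[of "lift a b c d" p k t n] by (auto simp: inner)
      have "p \<bullet> v_star = of_int (3 * p1 + p2 + 3 * p3 + p4) / of_int 4"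
        by (simp add: v_star_def inner field_simps)
      with True show "in_gap 4 k (3 * p1 + p2 + 3 * p3 + p4)"
        by (rule in_gap_if_in_split_set) simp
    qed
  qed
  then show ?thesis
    unfolding split_closure_def by blast
qed

subsection \<open>The split closure of \<open>P_Lplus\<close>\<close>

lemma split_closure_P_Lplus_sum_le:
  assumes "w \<in> split_closure P_Lplus"
  shows "w $ X1 + w $ X2 \<le> 2"
proof -
  let ?C = "\<lambda>\<pi>. {y. vec6 1 0 (-1) (-2) 0 0 \<bullet> y = 0} \<inter> {y. vec6 0 1 0 0 (-1) (-2) \<bullet> y = 0} \<inter>
    {y. \<pi> \<bullet> y \<le> 1}"
  txt \<open>
    A point of \<open>P_Lplus\<close> with \<open>z\<^sub>1\<^sub>1 + z\<^sub>1\<^sub>2 + z\<^sub>2\<^sub>2 \<ge> 2\<close> has \<open>z\<^sub>2\<^sub>2 = 1 = z\<^sub>1\<^sub>1 + z\<^sub>1\<^sub>2\<close>,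
    hence \<open>x\<^sub>2 = 2\<close> and \<open>x\<^sub>1 \<ge> 1\<close>, violating \<open>x\<^sub>1 + 10 x\<^sub>2 \<le> 20\<close>; symmetrically for
    \<open>z\<^sub>1\<^sub>2 + z\<^sub>2\<^sub>1 + z\<^sub>2\<^sub>2\<close>.
  \<close>
  have cut: "w \<in> ?C (vec6 0 0 a 1 (1 - a) 1)" if "a \<in> {0, 1}" for a
  proof (rule subsetD[OF split_closure_subset_convex assms])
    show "\<forall>i. vec6 0 0 a 1 (1 - a) 1 $ i \<in> \<int>"
      using that by (auto simp: all_coord_iff)
    show "convex (?C (vec6 0 0 a 1 (1 - a) 1))"
      by (intro convex_Int convex_hyperplane convex_halfspace_le)
    show "P_Lplus - split_set (vec6 0 0 a 1 (1 - a) 1) 1 \<subseteq> ?C (vec6 0 0 a 1 (1 - a) 1)"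
      using that by (auto simp: P_Lplus_def P_L_def P_def in01_def split_set_def inner_coord)
  qed
  from cut[of 1] cut[of 0] show ?thesis
    by (simp add: inner_coord)
qed

theorem theorem4:
  shows "proj_x ` split_closure P_Lplus \<subset> proj_x ` split_closure P_L"
proof
  show "proj_x ` split_closure P_Lplus \<subseteq> proj_x ` split_closure P_L"
    by (intro image_mono split_closure_mono) (auto simp: P_Lplus_def)
  have "(5/4, 5/4) \<in> proj_x ` split_closure P_L"
    using v_star_in_split_closure_P_L by (force simp: proj_x_def v_star_def lift_def)
  moreover have "(5/4, 5/4) \<notin> proj_x ` split_closure P_Lplus"
    using split_closure_P_Lplus_sum_le by (force simp: proj_x_def)
  ultimately show "proj_x ` split_closure P_Lplus \<noteq> proj_x ` split_closure P_L"
    by blast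
qed

end
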